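(* Suppose $\lambda_1=0$ and $\beta$ satisfies condition $(E)$. Let $\varphi$ be an entire function and $C_\varphi f=f\circ\varphi$. Then $C_\varphi$ is a bounded operator from $\mathcal{H}(E,\beta)$ into itself if and only if either (i) $\varphi$ is constant, or (ii) $\varphi(z)=z+b$ for some $b\in\mathbb{C}$ with $\operatorname{Re}(b)\ge0$. Moreover, $\|C_\varphi\|\ge1$ in case (i), and $\|C_\varphi\|=1$ in case (ii).
   Context: Fix a sequence $\Lambda=(\lambda_n)_{n\ge1}$ of real numbers with $0\le\lambda_1<\lambda_2<\cdots$ and $\lambda_n\to+\infty$, such that $\limsup_{n\to\infty}\frac{\log n}{\lambda_n}<+\infty$. For a sequence $\beta=(\beta_n)$ of positive reals, condition $(E)$ is: $\liminf_{n\to\infty}\frac{\log\beta_n}{\lambda_n}=+\infty$. Under $(E)$, $\mathcal{H}(E,\beta)$ denotes the Hilbert space of entire functions $f(z)=\sum_{n=1}^\infty a_ne^{-\lambda_nz}$ ($a_n\in\mathbb{C}$; the representation is unique) with norm $\|f\|=\big(\sum_{n=1}^\infty|a_n|^2\beta_n^2\big)^{1/2}<\infty$. When $\lambda_1=0$ this space contains the constant functions. *)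

theory Defs
  imports "HOL-Analysis.Analysis"
begin

text \<open>Indexing: the paper's sequence (lambda_n)_{n>=1} is rendered as lam :: nat => real
  indexed from 0, i.e. lam k = lambda_{k+1}; likewise beta k = beta_{k+1}.\<close>

definition dirichlet_rep :: "(nat \<Rightarrow> real) \<Rightarrow> (nat \<Rightarrow> real) \<Rightarrow> (complex \<Rightarrow> complex) \<Rightarrow> (nat \<Rightarrow> complex) \<Rightarrow> bool" where
  "dirichlet_rep lam beta f a \<longleftrightarrow>
     summable (\<lambda>n. (cmod (a n))\<^sup>2 * (beta n)\<^sup>2) \<and>
     (\<forall>z. (\<lambda>n. a n * exp (- of_real (lam n) * z)) sums f z)"

definition HE :: "(nat \<Rightarrow> real) \<Rightarrow> (nat \<Rightarrow> real) \<Rightarrow> (complex \<Rightarrow> complex) set" where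
  "HE lam beta = {f. \<exists>a. dirichlet_rep lam beta f a}"

definition HE_norm :: "(nat \<Rightarrow> real) \<Rightarrow> (nat \<Rightarrow> real) \<Rightarrow> (complex \<Rightarrow> complex) \<Rightarrow> real" where
  "HE_norm lam beta f =
     sqrt (\<Sum>n. (cmod ((THE a. dirichlet_rep lam beta f a) n))\<^sup>2 * (beta n)\<^sup>2)"

definition comp_op_bounded :: "(nat \<Rightarrow> real) \<Rightarrow> (nat \<Rightarrow> real) \<Rightarrow> (complex \<Rightarrow> complex) \<Rightarrow> bool" where
  "comp_op_bounded lam beta \<phi> \<longleftrightarrow>
     (\<forall>f\<in>HE lam beta. f \<circ> \<phi> \<in> HE lam beta) \<and>
     (\<exists>M. \<forall>f\<in>HE lam beta. HE_norm lam beta (f \<circ> \<phi>) \<le> M * HE_norm lam beta f)"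

definition comp_op_norm :: "(nat \<Rightarrow> real) \<Rightarrow> (nat \<Rightarrow> real) \<Rightarrow> (complex \<Rightarrow> complex) \<Rightarrow> real" where
  "comp_op_norm lam beta \<phi> =
     Sup {HE_norm lam beta (f \<circ> \<phi>) | f. f \<in> HE lam beta \<and> HE_norm lam beta f \<le> 1}"

end

theory Submission
  imports Defs "HOL-Complex_Analysis.Complex_Analysis"
begin

(* Write K t = (\<Sum>n. exp (- 2 * t * lam n) / (beta n)\<^sup>2) for the squared norm of the reproducing
   kernel at a point of real part t. Testing a bounded C\<^sub>\<phi> on the kernel at \<phi> z gives
   K (Re (\<phi> z)) \<le> \<parallel>C\<^sub>\<phi>\<parallel>\<^sup>2 * K (Re z); as every term of K except the constant one grows
   exponentially when t \<rightarrow> -\<infinity>, this forces Re (\<phi> z) \<ge> Re z - C on the left half-plane.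
   Now h = exp (- lam 1 * \<phi>) = C\<^sub>\<phi> (exp (- lam 1 * _)) lies in the space, so h tends to its constant
   coefficient like exp (- lam 1 * Re z) on the right half-plane, while the lower bound on Re \<phi>
   controls h on the left one. By Liouville, exp (lam 1 * z) * (h z - c) is constant, and
   differentiating exp (- lam 1 * \<phi> z) = c + \<gamma> * exp (- lam 1 * z) shows that \<phi> is constant or
   a translation z + b. Translations with Re b < 0 blow up the monomials exp (- lam k * z).
   Conversely, constant maps and translations with Re b \<ge> 0 are bounded, the latter contractive,
   and constant functions are fixed by every C\<^sub>\<phi>, which gives the norm statements. *)

lemma entire_exp_comp_eq_affine_exp_cases:
  fixes \<phi> :: "complex \<Rightarrow> complex" and L c \<gamma> :: complex
  assumes hol: "\<phi> holomorphic_on UNIV" and L: "L \<noteq> 0"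
    and eq: "\<And>z. exp (- L * \<phi> z) = c + \<gamma> * exp (- L * z)"
  shows "(\<exists>a. \<forall>z. \<phi> z = a) \<or> (\<exists>b. \<forall>z. \<phi> z = z + b)"
proof -
  have deriv_eq: "deriv \<phi> z * exp (- L * \<phi> z) = exp (- L * \<phi> z) - c" for z
  proof -
    have "(\<phi> has_field_derivative deriv \<phi> z) (at z)"
      using holomorphic_derivI[OF hol open_UNIV UNIV_I] .
    then have "((\<lambda>z. exp (- L * \<phi> z)) has_field_derivative
                 exp (- L * \<phi> z) * (- L * deriv \<phi> z)) (at z)"
      by (auto intro!: derivative_eq_intros)
    moreover have "((\<lambda>z. exp (- L * \<phi> z)) has_field_derivative \<gamma> * (exp (- L * z) * - L)) (at z)"
      unfolding eq by (auto intro!: derivative_eq_intros)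
    ultimately have "exp (- L * \<phi> z) * (- L * deriv \<phi> z) = \<gamma> * (exp (- L * z) * - L)"
      by (rule DERIV_unique)
    with L eq[of z] show ?thesis
      by (simp add: algebra_simps) (metis distrib_left mult_left_cancel)
  qed
  have affine_if_deriv_const: "\<exists>b. \<forall>z. \<phi> z = d * z + b" if "\<And>z. deriv \<phi> z = d" for d
  proof -
    have "((\<lambda>z. \<phi> z - d * z) has_field_derivative 0) (at z within UNIV)" for z
      using holomorphic_derivI[OF hol open_UNIV UNIV_I, of z] that[of z]
      by (auto intro!: derivative_eq_intros)
    then obtain b where "\<forall>z\<in>UNIV. \<phi> z - d * z = b"
      using has_field_derivative_zero_constant[OF convex_UNIV] by blast
    then show ?thesis
      by (metis UNIV_I diff_add_cancel add.commute)
  qed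
  consider "\<gamma> = 0" | "c = 0" | "c \<noteq> 0" "\<gamma> \<noteq> 0"
    by blast
  then show ?thesis
  proof cases
    case 1
    then have "deriv \<phi> z = 0" for z
      using deriv_eq[of z] eq[of z] exp_not_eq_zero[of "- L * \<phi> z"] by simp
    then show ?thesis
      using affine_if_deriv_const[of 0] by auto
  next
    case 2
    then have "deriv \<phi> z = 1" for z
      using deriv_eq[of z] by simp
    then show ?thesis
      using affine_if_deriv_const[of 1] by (auto simp: add.commute)
  next
    case 3
    \<comment> \<open>The right-hand side vanishes somewhere, the left-hand side never does.\<close>
    define z0 where "z0 = - Ln (- c / \<gamma>) / L"
    have "exp (- L * z0) = - c / \<gamma>"
      using 3 L by (simp add: z0_def)
    then have "exp (- L * \<phi> z0) = 0"
      using eq[of z0] 3 by simp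
    then show ?thesis
      by simp
  qed
qed

lemma entire_eq_const_plus_exp_if_half_plane_bounds:
  fixes h :: "complex \<Rightarrow> complex" and L A B :: real
  assumes hol: "h holomorphic_on UNIV"
    and right: "\<And>z. Re z \<ge> 0 \<Longrightarrow> cmod (h z - c) \<le> A * exp (- L * Re z)"
    and left: "\<And>z. Re z \<le> 0 \<Longrightarrow> cmod (h z) \<le> B * exp (- L * Re z)"
    and L: "L > 0"
  obtains \<gamma> where "\<And>z. h z = c + \<gamma> * exp (- of_real L * z)"
proof -
  define G where "G z = exp (of_real L * z) * (h z - c)" for z
  have "G holomorphic_on UNIV"
    unfolding G_def by (intro holomorphic_intros hol)
  moreover have "cmod (G z) \<le> max A (B + cmod c)" for z
  proof (cases "Re z \<ge> 0")
    case True
    have "cmod (G z) = exp (L * Re z) * cmod (h z - c)"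
      by (simp add: G_def norm_mult norm_exp_eq_Re)
    also have "\<dots> \<le> exp (L * Re z) * (A * exp (- L * Re z))"
      using right[OF True] by (rule mult_left_mono) simp
    also have "\<dots> = A"
      by (simp add: mult.left_commute mult_exp_exp)
    finally show ?thesis
      by simp
  next
    case False
    have "cmod (G z) \<le> exp (L * Re z) * cmod (h z) + exp (L * Re z) * cmod c"
      by (simp add: G_def norm_mult norm_exp_eq_Re distrib_left[symmetric] mult_left_mono
          norm_triangle_ineq4)
    also have "\<dots> \<le> exp (L * Re z) * (B * exp (- L * Re z)) + 1 * cmod c"
      using left[of z] False L
      by (intro add_mono mult_left_mono mult_right_mono) (simp_all add: mult_nonneg_nonpos)
    also have "\<dots> = B + cmod c"
      by (simp add: mult.left_commute mult_exp_exp)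
    finally show ?thesis
      by simp
  qed
  then have "bounded (range G)"
    unfolding bounded_iff by blast
  ultimately have "G constant_on UNIV"
    by (rule Liouville_theorem)
  then obtain \<gamma> where \<gamma>: "\<And>z. G z = \<gamma>"
    unfolding constant_on_def by blast
  have "h z = c + \<gamma> * exp (- of_real L * z)" for z
  proof -
    have "h z - c = exp (- of_real L * z) * G z"
      by (simp add: G_def mult.assoc[symmetric] mult_exp_exp)
    then show ?thesis
      by (simp add: \<gamma> algebra_simps)
  qed
  with that show ?thesis
    by blast
qed

text \<open>Multiplying the series by \<open>exp (lam m * x)\<close> isolates the first nonzero coefficient \<open>d m\<close>;
  the remaining terms decay like \<open>exp ((lam m - lam (Suc m)) * x)\<close>.\<close>
lemma dirichlet_series_zero_first_coeff_le:
  fixes lam :: "nat \<Rightarrow> real" and d :: "nat \<Rightarrow> complex"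
  assumes mono: "strict_mono lam"
    and zero: "\<And>x::real. (\<lambda>n. d n * exp (- of_real (lam n) * of_real x)) sums 0"
    and abs_summable: "summable (\<lambda>n. cmod (d n) * exp (- lam n))"
    and below: "\<And>n. n < m \<Longrightarrow> d n = 0"
    and x: "x \<ge> 1"
  shows "cmod (d m) \<le> exp (lam (Suc m)) * (\<Sum>n. cmod (d n) * exp (- lam n)) * exp ((lam m - lam (Suc m)) * x)"
proof -
  define t where "t n = d n * exp (of_real ((lam m - lam n) * x))" for n
  have "(\<lambda>n. d n * exp (- of_real (lam n) * of_real x) * exp (of_real (lam m * x))) sums 0"
    using sums_mult2[OF zero[of x]] by simp
  moreover have "d n * exp (- of_real (lam n) * of_real x) * exp (of_real (lam m * x)) = t n" for n
    by (simp add: t_def mult.assoc mult_exp_exp algebra_simps)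
  ultimately have "t sums 0"
    by simp
  then have "(\<lambda>n. t n - (if n = m then t n else 0)) sums (0 - t m)"
    by (intro sums_diff sums_single)
  moreover have "t n - (if n = m then t n else 0) = (if m < n then t n else 0)" for n
    using below[of n] by (auto simp: t_def)
  ultimately have tail: "(\<lambda>n. if m < n then t n else 0) sums (- d m)"
    by (simp add: t_def)
  have tail_bound: "norm (if m < n then t n else 0)
      \<le> exp (lam (Suc m)) * exp ((lam m - lam (Suc m)) * x) * (cmod (d n) * exp (- lam n))" for n
  proof (cases "m < n")
    case True
    then have "lam (Suc m) \<le> lam n"
      using mono by (simp add: strict_mono_less_eq)
    then have "0 \<le> (lam n - lam (Suc m)) * (x - 1)"
      using x by simp
    then have "(lam m - lam n) * x \<le> lam (Suc m) + (lam m - lam (Suc m)) * x + (- lam n)"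
      by (simp add: algebra_simps)
    then have "exp ((lam m - lam n) * x) \<le> exp (lam (Suc m)) * exp ((lam m - lam (Suc m)) * x) * exp (- lam n)"
      by (simp add: mult_exp_exp)
    with True show ?thesis
      by (simp add: t_def norm_mult norm_exp_eq_Re mult_left_mono mult_ac)
  qed simp
  have "cmod (d m) = norm (\<Sum>n. if m < n then t n else 0)"
    using tail by (simp add: sums_iff)
  also have "\<dots> \<le> (\<Sum>n. exp (lam (Suc m)) * exp ((lam m - lam (Suc m)) * x) * (cmod (d n) * exp (- lam n)))"
    by (rule norm_suminf_le[OF tail_bound summable_mult[OF abs_summable]])
  also have "\<dots> = exp (lam (Suc m)) * (\<Sum>n. cmod (d n) * exp (- lam n)) * exp ((lam m - lam (Suc m)) * x)"
    unfolding suminf_mult[OF abs_summable] by (simp add: mult_ac)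
  finally show ?thesis .
qed

lemma dirichlet_series_zero_imp_coeff_zero:
  fixes lam :: "nat \<Rightarrow> real" and d :: "nat \<Rightarrow> complex"
  assumes mono: "strict_mono lam"
    and zero: "\<And>x::real. (\<lambda>n. d n * exp (- of_real (lam n) * of_real x)) sums 0"
    and abs_summable: "summable (\<lambda>n. cmod (d n) * exp (- lam n))"
  shows "d m = 0"
proof (induction m rule: less_induct)
  case (less m)
  define K where "K = exp (lam (Suc m)) * (\<Sum>n. cmod (d n) * exp (- lam n))"
  have "lam m - lam (Suc m) < 0"
    using mono by (simp add: strict_mono_def)
  then have "((\<lambda>x. exp ((lam m - lam (Suc m)) * x)) \<longlongrightarrow> 0) at_top"
    by (intro filterlim_compose[OF exp_at_bot]
        filterlim_tendsto_neg_mult_at_bot[OF tendsto_const _ filterlim_ident])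
  then have "((\<lambda>x. K * exp ((lam m - lam (Suc m)) * x)) \<longlongrightarrow> 0) at_top"
    by (rule tendsto_mult_right_zero)
  moreover have "eventually (\<lambda>x. cmod (d m) \<le> K * exp ((lam m - lam (Suc m)) * x)) at_top"
    using eventually_ge_at_top[of 1]
    by eventually_elim (use dirichlet_series_zero_first_coeff_le[OF mono zero abs_summable less.IH] in
        \<open>simp add: K_def\<close>)
  ultimately have "cmod (d m) \<le> 0"
    by (rule tendsto_lowerbound) simp
  then show "d m = 0"
    by simp
qed

locale dirichlet_space =
  fixes lam beta :: "nat \<Rightarrow> real"
  assumes lam_mono: "strict_mono lam"
    and lam0: "lam 0 = 0"
    and lam_inf: "filterlim lam at_top sequentially"
    and lam_growth: "\<exists>C. eventually (\<lambda>n. ln (real (Suc n)) / lam n \<le> C) sequentially"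
    and beta_pos: "\<And>n. beta n > 0"
    and condE: "filterlim (\<lambda>n. ln (beta n) / lam n) at_top sequentially"
begin

lemma lam_nonneg: "lam n \<ge> 0"
  using lam0 lam_mono by (metis le0 strict_mono_less_eq)

lemma lam_pos: "n > 0 \<Longrightarrow> lam n > 0"
  using lam0 lam_mono by (metis strict_mono_less)

lemma lam_ge_lam1: "n > 0 \<Longrightarrow> lam 1 \<le> lam n"
  using lam_mono by (simp add: strict_mono_less_eq)

text \<open>Condition (E) beats any exponential in the frequencies: eventually
  \<open>exp (s * lam n) * (n + 1)\<^sup>2 \<le> (beta n)\<^sup>2\<close>, and \<open>1 / (n + 1)\<^sup>2\<close> is summable.\<close>
lemma summable_exp_lam_over_beta_sq: "summable (\<lambda>n. exp (s * lam n) / (beta n)\<^sup>2)"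
proof (rule summable_comparison_test_ev)
  obtain C where C: "eventually (\<lambda>n. ln (real (Suc n)) / lam n \<le> C) sequentially"
    using lam_growth by blast
  have "eventually (\<lambda>n. s/2 + max C 0 \<le> ln (beta n) / lam n) sequentially"
    using condE by (simp add: filterlim_at_top)
  with C eventually_gt_at_top[of 0]
  show "eventually (\<lambda>n. norm (exp (s * lam n) / (beta n)\<^sup>2) \<le> inverse (real (Suc n) ^ 2)) sequentially"
  proof eventually_elim
    case (elim n)
    have lam_n: "lam n > 0"
      using lam_pos elim(2) by blast
    have "ln (real (Suc n)) \<le> C * lam n"
      using elim(1) by (simp only: pos_divide_le_eq[OF lam_n])
    also have "\<dots> \<le> max C 0 * lam n"
      using lam_n by (intro mult_right_mono) simp_all
    finally have "ln (real (Suc n)) \<le> max C 0 * lam n" .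
    moreover have "(s/2 + max C 0) * lam n \<le> ln (beta n)"
      using elim(3) by (simp only: pos_le_divide_eq[OF lam_n])
    moreover have "(s/2 + max C 0) * lam n = s * lam n / 2 + max C 0 * lam n"
      by (simp add: distrib_right)
    ultimately have exponent: "s * lam n + 2 * ln (real (Suc n)) \<le> 2 * ln (beta n)"
      by linarith
    have "exp (s * lam n) * real (Suc n) ^ 2 = exp (s * lam n + 2 * ln (real (Suc n)))"
      by (simp only: exp_add exp_double exp_ln of_nat_0_less_iff zero_less_Suc)
    also have "\<dots> \<le> exp (2 * ln (beta n))"
      using exponent by simp
    also have "\<dots> = (beta n)\<^sup>2"
      using beta_pos[of n] by (simp add: exp_double)
    finally show ?case
      using beta_pos[of n] by (simp add: divide_simps del: of_nat_Suc)
  qed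
  show "summable (\<lambda>n. inverse (real (Suc n) ^ 2))"
    using inverse_power_summable[of 2, where 'a=real] summable_Suc_iff[of "\<lambda>n. inverse (real n ^ 2)"]
    by simp
qed

text \<open>\<open>kernel_diag (Re w)\<close> is the squared norm of the reproducing kernel at \<open>w\<close>,
  i.e.\ of \<open>\<Sum> exp (- lam n * cnj w) / (beta n)\<^sup>2 * exp (- lam n * z)\<close>.\<close>
definition kernel_diag :: "real \<Rightarrow> real" where
  "kernel_diag t = (\<Sum>n. exp (- 2 * t * lam n) / (beta n)\<^sup>2)"

lemma kernel_diag_sums: "(\<lambda>n. exp (- 2 * t * lam n) / (beta n)\<^sup>2) sums kernel_diag t"
  unfolding kernel_diag_def by (rule summable_sums[OF summable_exp_lam_over_beta_sq])

lemma kernel_diag_pos: "kernel_diag t > 0"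
  unfolding kernel_diag_def
  by (rule suminf_pos[OF summable_exp_lam_over_beta_sq]) (simp add: beta_pos less_imp_neq[symmetric])

lemma partial_sum_coeff_exp_le:
  assumes sq: "summable (\<lambda>n. (cmod (a n))\<^sup>2 * (beta n)\<^sup>2)"
  shows "(\<Sum>n<N. cmod (a n) * exp (- t * lam n)) \<le>
           sqrt (\<Sum>n. (cmod (a n))\<^sup>2 * (beta n)\<^sup>2) * sqrt (kernel_diag t)"
proof -
  define x where "x n = cmod (a n) * beta n" for n
  define y where "y n = exp (- t * lam n) / beta n" for n
  have x2: "(x n)\<^sup>2 = (cmod (a n))\<^sup>2 * (beta n)\<^sup>2" for n
    by (simp add: x_def power_mult_distrib)
  have y2: "(y n)\<^sup>2 = exp (- 2 * t * lam n) / (beta n)\<^sup>2" for n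
    unfolding y_def power_divide exp_double[symmetric] by simp
  have "(\<Sum>n<N. x n * y n)\<^sup>2 \<le> (\<Sum>n<N. (x n)\<^sup>2) * (\<Sum>n<N. (y n)\<^sup>2)"
    by (rule Cauchy_Schwarz_ineq_sum)
  also have "\<dots> \<le> (\<Sum>n. (x n)\<^sup>2) * kernel_diag t"
  proof (intro mult_mono sum_nonneg suminf_nonneg)
    show "(\<Sum>n<N. (x n)\<^sup>2) \<le> (\<Sum>n. (x n)\<^sup>2)"
      using sq by (intro sum_le_suminf) (auto simp: x2)
    show "(\<Sum>n<N. (y n)\<^sup>2) \<le> kernel_diag t"
      unfolding y2 kernel_diag_def
      by (intro sum_le_suminf summable_exp_lam_over_beta_sq) (simp_all add: beta_pos)
  qed (use sq in \<open>auto simp: x2\<close>)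
  finally have "(\<Sum>n<N. x n * y n) \<le> sqrt ((\<Sum>n. (x n)\<^sup>2) * kernel_diag t)"
    by (rule real_le_rsqrt)
  moreover have "x n * y n = cmod (a n) * exp (- t * lam n)" for n
    using beta_pos[of n] by (simp add: x_def y_def)
  ultimately show ?thesis
    by (simp add: x2 real_sqrt_mult)
qed

lemma summable_coeff_exp:
  assumes "summable (\<lambda>n. (cmod (a n))\<^sup>2 * (beta n)\<^sup>2)"
  shows "summable (\<lambda>n. cmod (a n) * exp (- t * lam n))"
proof (rule bounded_imp_summable)
  show "(\<Sum>k\<le>n. cmod (a k) * exp (- t * lam k)) \<le>
          sqrt (\<Sum>n. (cmod (a n))\<^sup>2 * (beta n)\<^sup>2) * sqrt (kernel_diag t)" for n
    using partial_sum_coeff_exp_le[OF assms, where N = "Suc n"] by (simp add: lessThan_Suc_atMost)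
qed simp

lemma suminf_coeff_exp_le:
  assumes "summable (\<lambda>n. (cmod (a n))\<^sup>2 * (beta n)\<^sup>2)"
  shows "(\<Sum>n. cmod (a n) * exp (- t * lam n)) \<le>
           sqrt (\<Sum>n. (cmod (a n))\<^sup>2 * (beta n)\<^sup>2) * sqrt (kernel_diag t)"
  using assms by (intro suminf_le_const summable_coeff_exp partial_sum_coeff_exp_le)

lemma dirichlet_rep_suminf:
  assumes "summable (\<lambda>n. (cmod (a n))\<^sup>2 * (beta n)\<^sup>2)"
  shows "dirichlet_rep lam beta (\<lambda>z. \<Sum>n. a n * exp (- of_real (lam n) * z)) a"
  unfolding dirichlet_rep_def
proof (intro conjI allI assms summable_sums)
  fix z
  have "summable (\<lambda>n. norm (a n * exp (- of_real (lam n) * z)))"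
    using summable_coeff_exp[OF assms, of "Re z"] by (simp add: norm_mult norm_exp_eq_Re mult.commute)
  then show "summable (\<lambda>n. a n * exp (- of_real (lam n) * z))"
    by (rule summable_norm_cancel)
qed

lemma dirichlet_rep_monomial:
  "dirichlet_rep lam beta (\<lambda>z. v * exp (- of_real (lam k) * z)) (\<lambda>n. if n = k then v else 0)"
  unfolding dirichlet_rep_def
proof (intro conjI allI)
  show "summable (\<lambda>n. (cmod (if n = k then v else 0))\<^sup>2 * (beta n)\<^sup>2)"
    by (rule summable_finite[of "{k}"]) auto
  show "(\<lambda>n. (if n = k then v else 0) * exp (- of_real (lam n) * z)) sums (v * exp (- of_real (lam k) * z))"
    for z by (rule sums_cong[THEN iffD2, OF _ sums_single]) simp
qed

lemma dirichlet_rep_unique: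
  assumes a: "dirichlet_rep lam beta f a" and b: "dirichlet_rep lam beta f b"
  shows "a = b"
proof
  fix m
  have "a m - b m = 0"
  proof (rule dirichlet_series_zero_imp_coeff_zero[OF lam_mono])
    fix x :: real
    have "(\<lambda>n. a n * exp (- of_real (lam n) * of_real x) - b n * exp (- of_real (lam n) * of_real x))
            sums (f x - f x)"
      using a b unfolding dirichlet_rep_def by (intro sums_diff) auto
    then show "(\<lambda>n. (a n - b n) * exp (- of_real (lam n) * of_real x)) sums 0"
      by (simp add: algebra_simps)
  next
    have "summable (\<lambda>n. cmod (a n) * exp (- 1 * lam n) + cmod (b n) * exp (- 1 * lam n))"
      using a b unfolding dirichlet_rep_def by (intro summable_add summable_coeff_exp) auto
    then show "summable (\<lambda>n. cmod (a n - b n) * exp (- lam n))"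
      by (rule summable_comparison_test')
        (simp add: distrib_right[symmetric] mult_right_mono norm_triangle_ineq4)
  qed
  then show "a m = b m"
    by simp
qed

lemma HE_norm_eq:
  assumes "dirichlet_rep lam beta f a"
  shows "HE_norm lam beta f = sqrt (\<Sum>n. (cmod (a n))\<^sup>2 * (beta n)\<^sup>2)"
proof -
  have "(THE a. dirichlet_rep lam beta f a) = a"
    using assms dirichlet_rep_unique by blast
  then show ?thesis
    by (simp add: HE_norm_def)
qed

lemma HE_norm_nonneg:
  assumes "f \<in> HE lam beta"
  shows "HE_norm lam beta f \<ge> 0"
proof -
  obtain a where "dirichlet_rep lam beta f a"
    using assms by (auto simp: HE_def)
  then show ?thesis
    by (auto simp: HE_norm_eq dirichlet_rep_def intro!: suminf_nonneg)
qed

lemma norm_eval_le: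
  assumes "f \<in> HE lam beta"
  shows "cmod (f z) \<le> HE_norm lam beta f * sqrt (kernel_diag (Re z))"
proof -
  obtain a where a: "dirichlet_rep lam beta f a"
    using assms by (auto simp: HE_def)
  then have sq: "summable (\<lambda>n. (cmod (a n))\<^sup>2 * (beta n)\<^sup>2)"
    and f: "(\<lambda>n. a n * exp (- of_real (lam n) * z)) sums f z"
    by (auto simp: dirichlet_rep_def)
  have "cmod (f z) = norm (\<Sum>n. a n * exp (- of_real (lam n) * z))"
    using f by (simp add: sums_iff)
  also have "\<dots> \<le> (\<Sum>n. cmod (a n) * exp (- Re z * lam n))"
    by (rule norm_suminf_le[OF _ summable_coeff_exp[OF sq]])
      (simp add: norm_mult norm_exp_eq_Re mult.commute)
  also have "\<dots> \<le> HE_norm lam beta f * sqrt (kernel_diag (Re z))"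
    using suminf_coeff_exp_le[OF sq] by (simp add: HE_norm_eq[OF a])
  finally show ?thesis .
qed

lemma monomial_in_HE: "(\<lambda>z. v * exp (- of_real (lam k) * z)) \<in> HE lam beta"
  using dirichlet_rep_monomial by (auto simp: HE_def)

lemma HE_norm_monomial: "HE_norm lam beta (\<lambda>z. v * exp (- of_real (lam k) * z)) = cmod v * beta k"
proof -
  have "(\<Sum>n. (cmod (if n = k then v else 0))\<^sup>2 * (beta n)\<^sup>2) = (cmod v * beta k)\<^sup>2"
    by (subst suminf_finite[of "{k}"]) (auto simp: power_mult_distrib)
  then show ?thesis
    unfolding HE_norm_eq[OF dirichlet_rep_monomial] using beta_pos[of k] by simp
qed

lemma const_in_HE: "(\<lambda>_. v) \<in> HE lam beta"
  using monomial_in_HE[of v 0] by (simp add: lam0)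

lemma HE_norm_const: "HE_norm lam beta (\<lambda>_. v) = cmod v * beta 0"
  using HE_norm_monomial[of v 0] by (simp add: lam0)

lemma comp_op_norm_ge_1:
  assumes "comp_op_bounded lam beta \<phi>"
  shows "comp_op_norm lam beta \<phi> \<ge> 1"
proof -
  obtain M where M: "\<And>f. f \<in> HE lam beta \<Longrightarrow> HE_norm lam beta (f \<circ> \<phi>) \<le> M * HE_norm lam beta f"
    using assms by (auto simp: comp_op_bounded_def)
  define S where "S = {HE_norm lam beta (f \<circ> \<phi>) |f. f \<in> HE lam beta \<and> HE_norm lam beta f \<le> 1}"
  \<comment> \<open>Constants are fixed by every composition operator.\<close>
  define e where "e = (\<lambda>_::complex. complex_of_real (1 / beta 0))"
  have "e \<in> HE lam beta" "HE_norm lam beta e = 1" "e \<circ> \<phi> = e"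
    using beta_pos[of 0] by (auto simp: e_def const_in_HE HE_norm_const norm_divide)
  then have "1 \<in> S"
    unfolding S_def by force
  moreover have "bdd_above S"
  proof (rule bdd_aboveI)
    fix y
    assume "y \<in> S"
    then obtain f where f: "f \<in> HE lam beta" "HE_norm lam beta f \<le> 1"
      and y: "y = HE_norm lam beta (f \<circ> \<phi>)"
      unfolding S_def by blast
    have "M * HE_norm lam beta f \<le> max M 0 * HE_norm lam beta f"
      using HE_norm_nonneg[OF f(1)] by (intro mult_right_mono) auto
    also have "\<dots> \<le> max M 0"
      using f(2) by (simp add: mult_left_le)
    finally show "y \<le> max M 0"
      using M[OF f(1)] y by simp
  qed
  ultimately show ?thesis
    unfolding comp_op_norm_def S_def[symmetric] by (rule cSup_upper)
qed

lemma comp_op_contraction: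
  assumes closed: "\<And>f. f \<in> HE lam beta \<Longrightarrow> f \<circ> \<phi> \<in> HE lam beta"
    and contraction: "\<And>f. f \<in> HE lam beta \<Longrightarrow> HE_norm lam beta (f \<circ> \<phi>) \<le> HE_norm lam beta f"
  shows "comp_op_bounded lam beta \<phi>" and "comp_op_norm lam beta \<phi> = 1"
proof -
  show bounded: "comp_op_bounded lam beta \<phi>"
    using closed contraction by (auto simp: comp_op_bounded_def intro!: exI[of _ 1])
  have "comp_op_norm lam beta \<phi> \<le> 1"
    unfolding comp_op_norm_def
  proof (rule cSup_least)
    show "{HE_norm lam beta (f \<circ> \<phi>) |f. f \<in> HE lam beta \<and> HE_norm lam beta f \<le> 1} \<noteq> {}"
      using const_in_HE[of 0] HE_norm_const[of 0] by auto
  qed (use contraction in force)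
  with comp_op_norm_ge_1[OF bounded] show "comp_op_norm lam beta \<phi> = 1"
    by simp
qed

lemma comp_op_bounded_const: "comp_op_bounded lam beta (\<lambda>_. c)"
  unfolding comp_op_bounded_def
proof (intro conjI ballI exI)
  fix f
  assume f: "f \<in> HE lam beta"
  show "f \<circ> (\<lambda>_. c) \<in> HE lam beta"
    using const_in_HE by (simp add: o_def)
  have "HE_norm lam beta (f \<circ> (\<lambda>_. c)) = cmod (f c) * beta 0"
    by (simp add: o_def HE_norm_const)
  also have "\<dots> \<le> HE_norm lam beta f * sqrt (kernel_diag (Re c)) * beta 0"
    using norm_eval_le[OF f] beta_pos[of 0] by (intro mult_right_mono) auto
  finally show "HE_norm lam beta (f \<circ> (\<lambda>_. c)) \<le> (beta 0 * sqrt (kernel_diag (Re c))) * HE_norm lam beta f"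
    by (simp add: mult_ac)
qed

lemma weighted_coeff_translate_le:
  assumes "Re b \<ge> 0"
  shows "(cmod (v * exp (- of_real (lam n) * b)))\<^sup>2 * (beta n)\<^sup>2 \<le> (cmod v)\<^sup>2 * (beta n)\<^sup>2"
proof -
  have "exp (- lam n * Re b) \<le> 1"
    using lam_nonneg[of n] assms by simp
  then have "cmod (v * exp (- of_real (lam n) * b)) \<le> cmod v"
    by (simp add: norm_mult norm_exp_eq_Re mult_left_le)
  then show ?thesis
    by (intro mult_right_mono power_mono) simp_all
qed

lemma dirichlet_rep_translate:
  assumes a: "dirichlet_rep lam beta f a" and b: "Re b \<ge> 0"
  shows "dirichlet_rep lam beta (\<lambda>z. f (z + b)) (\<lambda>n. a n * exp (- of_real (lam n) * b))"
  unfolding dirichlet_rep_def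
proof (intro conjI allI)
  have "summable (\<lambda>n. (cmod (a n))\<^sup>2 * (beta n)\<^sup>2)"
    using a by (simp add: dirichlet_rep_def)
  then show "summable (\<lambda>n. (cmod (a n * exp (- of_real (lam n) * b)))\<^sup>2 * (beta n)\<^sup>2)"
    by (rule summable_comparison_test') (use weighted_coeff_translate_le[OF b] in simp)
  fix z
  have "(\<lambda>n. a n * exp (- of_real (lam n) * (z + b))) sums f (z + b)"
    using a by (simp add: dirichlet_rep_def)
  then show "(\<lambda>n. a n * exp (- of_real (lam n) * b) * exp (- of_real (lam n) * z)) sums f (z + b)"
    by (simp add: distrib_left mult_exp_exp mult.assoc add.commute)
qed

lemma HE_norm_translate_le:
  assumes a: "dirichlet_rep lam beta f a" and b: "Re b \<ge> 0"
  shows "HE_norm lam beta (\<lambda>z. f (z + b)) \<le> HE_norm lam beta f"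
proof -
  have "(\<Sum>n. (cmod (a n * exp (- of_real (lam n) * b)))\<^sup>2 * (beta n)\<^sup>2) \<le> (\<Sum>n. (cmod (a n))\<^sup>2 * (beta n)\<^sup>2)"
  proof (rule suminf_le)
    show "(cmod (a n * exp (- of_real (lam n) * b)))\<^sup>2 * (beta n)\<^sup>2 \<le> (cmod (a n))\<^sup>2 * (beta n)\<^sup>2" for n
      by (rule weighted_coeff_translate_le[OF b])
  qed (use a dirichlet_rep_translate[OF a b] in \<open>simp_all add: dirichlet_rep_def\<close>)
  then show ?thesis
    unfolding HE_norm_eq[OF a] HE_norm_eq[OF dirichlet_rep_translate[OF a b]] by simp
qed

lemma comp_op_translate:
  assumes "Re b \<ge> 0"
  shows "comp_op_bounded lam beta (\<lambda>z. z + b)" and "comp_op_norm lam beta (\<lambda>z. z + b) = 1"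
proof -
  have "f \<circ> (\<lambda>z. z + b) \<in> HE lam beta \<and> HE_norm lam beta (f \<circ> (\<lambda>z. z + b)) \<le> HE_norm lam beta f"
    if "f \<in> HE lam beta" for f
    using that dirichlet_rep_translate[OF _ assms] HE_norm_translate_le[OF _ assms]
    by (auto simp: HE_def o_def)
  then show "comp_op_bounded lam beta (\<lambda>z. z + b)" and "comp_op_norm lam beta (\<lambda>z. z + b) = 1"
    using comp_op_contraction by auto
qed

lemma kernel_function:
  obtains k where "k \<in> HE lam beta" "HE_norm lam beta k = sqrt (kernel_diag (Re w))"
    "k w = of_real (kernel_diag (Re w))"
proof -
  define a where "a n = exp (- of_real (lam n) * cnj w) / of_real ((beta n)\<^sup>2)" for n
  have weighted: "(cmod (a n))\<^sup>2 * (beta n)\<^sup>2 = exp (- 2 * Re w * lam n) / (beta n)\<^sup>2" for n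
    using beta_pos[of n]
    by (simp add: a_def norm_divide norm_power norm_exp_eq_Re power_divide exp_double[symmetric] field_simps)
  have sq: "summable (\<lambda>n. (cmod (a n))\<^sup>2 * (beta n)\<^sup>2)"
    unfolding weighted by (rule summable_exp_lam_over_beta_sq)
  define k where "k z = (\<Sum>n. a n * exp (- of_real (lam n) * z))" for z
  have rep: "dirichlet_rep lam beta k a"
    unfolding k_def by (rule dirichlet_rep_suminf[OF sq])
  have kernel_terms: "a n * exp (- of_real (lam n) * w) = of_real (exp (- 2 * Re w * lam n) / (beta n)\<^sup>2)" for n
  proof -
    have "- of_real (lam n) * cnj w + - of_real (lam n) * w = - of_real (lam n) * (w + cnj w)"
      by (simp add: algebra_simps)
    also have "\<dots> = of_real (- 2 * Re w * lam n)"
      by (simp add: complex_add_cnj)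
    finally have "- of_real (lam n) * cnj w + - of_real (lam n) * w = of_real (- 2 * Re w * lam n)" .
    then show ?thesis
      by (simp add: a_def mult_exp_exp flip: exp_of_real)
  qed
  have "(\<lambda>n. a n * exp (- of_real (lam n) * w)) sums of_real (kernel_diag (Re w))"
    unfolding kernel_terms by (rule sums_of_real[OF kernel_diag_sums])
  moreover have "(\<lambda>n. a n * exp (- of_real (lam n) * w)) sums k w"
    using rep by (simp add: dirichlet_rep_def)
  ultimately have "k w = of_real (kernel_diag (Re w))"
    using sums_unique2 by blast
  moreover have "HE_norm lam beta k = sqrt (kernel_diag (Re w))"
    by (simp add: HE_norm_eq[OF rep] weighted kernel_diag_def)
  moreover have "k \<in> HE lam beta"
    using rep by (auto simp: HE_def)
  ultimately show ?thesis
    using that by blast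
qed

lemma kernel_diag_comp_le:
  assumes closed: "\<And>f. f \<in> HE lam beta \<Longrightarrow> f \<circ> \<phi> \<in> HE lam beta"
    and bounded: "\<And>f. f \<in> HE lam beta \<Longrightarrow> HE_norm lam beta (f \<circ> \<phi>) \<le> M * HE_norm lam beta f"
  shows "kernel_diag (Re (\<phi> z)) \<le> M\<^sup>2 * kernel_diag (Re z)"
proof -
  obtain k where k: "k \<in> HE lam beta" "HE_norm lam beta k = sqrt (kernel_diag (Re (\<phi> z)))"
    "k (\<phi> z) = of_real (kernel_diag (Re (\<phi> z)))"
    using kernel_function .
  define r where "r = sqrt (kernel_diag (Re (\<phi> z)))"
  have r: "r > 0"
    using kernel_diag_pos by (simp add: r_def)
  have "r * r = cmod ((k \<circ> \<phi>) z)"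
    using k(3) kernel_diag_pos[THEN less_imp_le] by (simp add: r_def)
  also have "\<dots> \<le> HE_norm lam beta (k \<circ> \<phi>) * sqrt (kernel_diag (Re z))"
    by (rule norm_eval_le[OF closed[OF k(1)]])
  also have "\<dots> \<le> M * r * sqrt (kernel_diag (Re z))"
    using bounded[OF k(1)] k(2) kernel_diag_pos[THEN less_imp_le]
    by (intro mult_right_mono) (auto simp: r_def)
  finally have "r * r \<le> r * (M * sqrt (kernel_diag (Re z)))"
    by (simp add: mult_ac)
  then have "r \<le> M * sqrt (kernel_diag (Re z))"
    using r by (rule mult_left_le_imp_le)
  then have "(sqrt (kernel_diag (Re (\<phi> z))))\<^sup>2 \<le> (M * sqrt (kernel_diag (Re z)))\<^sup>2"
    using r unfolding r_def by (intro power_mono) simp_all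
  then show ?thesis
    using kernel_diag_pos by (simp add: power_mult_distrib less_imp_le)
qed

lemma kernel_diag_gt: "kernel_diag t > 1 / (beta 0)\<^sup>2"
proof -
  have "(\<Sum>n<2. exp (- 2 * t * lam n) / (beta n)\<^sup>2) \<le> kernel_diag t"
    unfolding kernel_diag_def
    by (intro sum_le_suminf summable_exp_lam_over_beta_sq) (simp_all add: beta_pos)
  moreover have "exp (- 2 * t * lam 1) / (beta 1)\<^sup>2 > 0"
    using beta_pos[of 1] by simp
  ultimately show ?thesis
    by (simp add: numeral_2_eq_2 lam0)
qed

text \<open>The first term of the kernel does not depend on \<open>t\<close>; all others grow at least like
  \<open>exp (2 * s * lam 1)\<close> under the shift \<open>t \<mapsto> t - s\<close>.\<close>
lemma kernel_diag_shift:
  assumes "s \<ge> 0"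
  shows "exp (2 * s * lam 1) * (kernel_diag t - 1 / (beta 0)\<^sup>2) \<le> kernel_diag (t - s) - 1 / (beta 0)\<^sup>2"
proof -
  define g where "g t n = (if n = 0 then 0 else exp (- 2 * t * lam n) / (beta n)\<^sup>2)" for t n
  have tail: "g t sums (kernel_diag t - 1 / (beta 0)\<^sup>2)" for t
  proof -
    have "(\<lambda>n. exp (- 2 * t * lam n) / (beta n)\<^sup>2 - (if n = 0 then exp (- 2 * t * lam n) / (beta n)\<^sup>2 else 0))
            sums (kernel_diag t - exp (- 2 * t * lam 0) / (beta 0)\<^sup>2)"
      by (intro sums_diff kernel_diag_sums sums_single)
    then show ?thesis
      unfolding g_def by (simp add: lam0 if_distrib cong: if_cong)
  qed
  have "exp (2 * s * lam 1) * g t n \<le> g (t - s) n" for n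
  proof (cases "n = 0")
    case False
    then have "exp (2 * s * lam 1) * exp (- 2 * t * lam n) \<le> exp (- 2 * (t - s) * lam n)"
      using assms lam_ge_lam1[of n] by (simp add: mult_exp_exp algebra_simps mult_left_mono)
    from divide_right_mono[OF this, of "(beta n)\<^sup>2"] False show ?thesis
      by (simp add: g_def)
  qed (simp add: g_def)
  then show ?thesis
    by (rule sums_le[OF _ sums_mult[OF tail] tail])
qed

lemma kernel_diag_antimono:
  assumes "u \<le> x"
  shows "kernel_diag x \<le> kernel_diag u"
proof -
  have "1 \<le> exp (2 * (x - u) * lam 1)"
    using assms lam_nonneg[of 1] by simp
  then have "kernel_diag x - 1 / (beta 0)\<^sup>2 \<le> exp (2 * (x - u) * lam 1) * (kernel_diag x - 1 / (beta 0)\<^sup>2)"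
    using kernel_diag_gt[of x] by (simp add: mult_le_cancel_right1)
  also have "\<dots> \<le> kernel_diag (x - (x - u)) - 1 / (beta 0)\<^sup>2"
    using assms by (intro kernel_diag_shift) simp
  finally show ?thesis
    by simp
qed

lemma kernel_diag_tail_proportion:
  assumes "x \<le> 0"
  shows "kernel_diag x * (kernel_diag 0 - 1 / (beta 0)\<^sup>2) \<le> kernel_diag 0 * (kernel_diag x - 1 / (beta 0)\<^sup>2)"
proof -
  have "kernel_diag 0 * (kernel_diag x - 1 / (beta 0)\<^sup>2) - kernel_diag x * (kernel_diag 0 - 1 / (beta 0)\<^sup>2)
      = (kernel_diag x - kernel_diag 0) / (beta 0)\<^sup>2"
    using beta_pos[of 0] by (simp add: field_simps)
  moreover have "0 \<le> (kernel_diag x - kernel_diag 0) / (beta 0)\<^sup>2"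
    using kernel_diag_antimono[OF assms] by simp
  ultimately show ?thesis
    by linarith
qed

lemma Re_lower_bound_if_kernel_diag_le:
  assumes dom: "\<And>z. kernel_diag (Re (\<phi> z)) \<le> B * kernel_diag (Re z)"
  obtains C where "\<And>z. Re z \<le> 0 \<Longrightarrow> Re z - C \<le> Re (\<phi> z)"
proof -
  define p0 where "p0 = 1 / (beta 0)\<^sup>2"
  define q where "q = kernel_diag 0 - p0"
  have p0: "p0 > 0" and q: "q > 0"
    using beta_pos[of 0] kernel_diag_gt by (simp_all add: q_def p0_def)
  define E where "E = \<bar>B\<bar> * kernel_diag 0 / q + 1"
  have E: "E \<ge> 1"
    using q kernel_diag_pos[of 0] by (simp add: E_def divide_nonneg_pos less_imp_le)
  define C where "C = ln E / (2 * lam 1)"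
  have C: "C \<ge> 0" and exp_C: "exp (2 * C * lam 1) = E"
    using E lam_pos[of 1] by (simp_all add: C_def)
  have "Re z - C \<le> Re (\<phi> z)" if z: "Re z \<le> 0" for z
  proof (rule ccontr)
    define x u where "x = Re z" and "u = Re (\<phi> z)"
    assume "\<not> Re z - C \<le> Re (\<phi> z)"
    then have "C \<le> x - u"
      by (simp add: x_def u_def)
    have tail_pos: "kernel_diag x - p0 > 0"
      using kernel_diag_gt by (simp add: p0_def)
    have "E \<le> exp (2 * (x - u) * lam 1)"
      unfolding exp_C[symmetric] using \<open>C \<le> x - u\<close> lam_nonneg[of 1] by (simp add: mult_right_mono)
    then have "E * (kernel_diag x - p0) \<le> exp (2 * (x - u) * lam 1) * (kernel_diag x - p0)"
      using tail_pos by (intro mult_right_mono) simp_all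
    also have "\<dots> \<le> kernel_diag u - p0"
      using kernel_diag_shift[of "x - u" x] C \<open>C \<le> x - u\<close> by (simp add: p0_def)
    also have "\<dots> < B * kernel_diag x"
      using dom[of z] p0 by (simp add: x_def u_def)
    also have "\<dots> \<le> \<bar>B\<bar> * kernel_diag x"
      using kernel_diag_pos[of x] by (intro mult_right_mono) simp_all
    finally have "E * (kernel_diag x - p0) * q < \<bar>B\<bar> * kernel_diag x * q"
      using q by (rule mult_strict_right_mono)
    also have "\<dots> \<le> \<bar>B\<bar> * kernel_diag 0 * (kernel_diag x - p0)"
      using kernel_diag_tail_proportion[of x] z
      by (simp add: x_def q_def p0_def mult.assoc mult_left_mono)
    also have "\<dots> \<le> E * (kernel_diag x - p0) * q"
      using q tail_pos by (simp add: E_def field_simps)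
    finally show False
      by simp
  qed
  with that show ?thesis .
qed

lemma norm_sub_first_coeff_le:
  assumes rep: "dirichlet_rep lam beta f c" and z: "Re z \<ge> 0"
  shows "cmod (f z - c 0) \<le> exp (- lam 1 * Re z) * (\<Sum>n. cmod (c n))"
proof -
  have "summable (\<lambda>n. (cmod (c n))\<^sup>2 * (beta n)\<^sup>2)"
    using rep by (simp add: dirichlet_rep_def)
  then have summable_c: "summable (\<lambda>n. cmod (c n))"
    using summable_coeff_exp[of c 0] by simp
  define t where "t n = (if n = 0 then 0 else c n * exp (- of_real (lam n) * z))" for n
  have "(\<lambda>n. c n * exp (- of_real (lam n) * z) - (if n = 0 then c n * exp (- of_real (lam n) * z) else 0))
          sums (f z - c 0 * exp (- of_real (lam 0) * z))"
    using rep by (intro sums_diff sums_single) (simp add: dirichlet_rep_def)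
  then have "t sums (f z - c 0)"
    unfolding t_def by (simp add: lam0 if_distrib cong: if_cong)
  then have "cmod (f z - c 0) = norm (\<Sum>n. t n)"
    by (simp add: sums_iff)
  also have "\<dots> \<le> (\<Sum>n. exp (- lam 1 * Re z) * cmod (c n))"
  proof (rule norm_suminf_le[OF _ summable_mult[OF summable_c]])
    show "norm (t n) \<le> exp (- lam 1 * Re z) * cmod (c n)" for n
    proof (cases "n = 0")
      case False
      then have "exp (- lam n * Re z) \<le> exp (- lam 1 * Re z)"
        using lam_ge_lam1[of n] z by (simp add: mult_right_mono)
      with False show ?thesis
        by (simp add: t_def norm_mult norm_exp_eq_Re mult_left_mono mult.commute)
    qed (simp add: t_def)
  qed
  also have "\<dots> = exp (- lam 1 * Re z) * (\<Sum>n. cmod (c n))"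
    by (rule suminf_mult[OF summable_c])
  finally show ?thesis .
qed

lemma comp_op_bounded_imp_exp_comp_affine:
  assumes bounded: "comp_op_bounded lam beta \<phi>" and entire: "\<phi> holomorphic_on UNIV"
  obtains c \<gamma> where "\<And>z. exp (- of_real (lam 1) * \<phi> z) = c + \<gamma> * exp (- of_real (lam 1) * z)"
proof -
  obtain M where closed: "\<And>f. f \<in> HE lam beta \<Longrightarrow> f \<circ> \<phi> \<in> HE lam beta"
    and M: "\<And>f. f \<in> HE lam beta \<Longrightarrow> HE_norm lam beta (f \<circ> \<phi>) \<le> M * HE_norm lam beta f"
    using bounded unfolding comp_op_bounded_def by blast
  obtain C where lower: "\<And>z. Re z \<le> 0 \<Longrightarrow> Re z - C \<le> Re (\<phi> z)"
    using Re_lower_bound_if_kernel_diag_le[OF kernel_diag_comp_le[OF closed M]] by blast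
  define h where "h z = exp (- of_real (lam 1) * \<phi> z)" for z
  have "h = (\<lambda>z. 1 * exp (- of_real (lam 1) * z)) \<circ> \<phi>"
    by (simp add: fun_eq_iff h_def)
  then have "h \<in> HE lam beta"
    using closed[OF monomial_in_HE[of 1 1]] by (simp only:)
  then obtain c where rep: "dirichlet_rep lam beta h c"
    by (auto simp: HE_def)
  have hol: "h holomorphic_on UNIV"
    unfolding h_def by (intro holomorphic_intros holomorphic_on_compose[OF entire, unfolded o_def])
  have right: "cmod (h z - c 0) \<le> (\<Sum>n. cmod (c n)) * exp (- lam 1 * Re z)" if "Re z \<ge> 0" for z
    using norm_sub_first_coeff_le[OF rep that] by (simp add: mult.commute)
  have left: "cmod (h z) \<le> exp (lam 1 * C) * exp (- lam 1 * Re z)" if "Re z \<le> 0" for z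
  proof -
    have "lam 1 * Re z \<le> lam 1 * (C + Re (\<phi> z))"
      using lower[OF that] lam_nonneg[of 1] by (intro mult_left_mono) simp_all
    then show ?thesis
      by (simp add: h_def norm_exp_eq_Re mult_exp_exp algebra_simps)
  qed
  obtain \<gamma> where "\<And>z. h z = c 0 + \<gamma> * exp (- of_real (lam 1) * z)"
    using entire_eq_const_plus_exp_if_half_plane_bounds[OF hol right left lam_pos[OF zero_less_one]]
    by blast
  with that show ?thesis
    unfolding h_def by blast
qed

lemma comp_op_bounded_translate_imp_Re_nonneg:
  assumes "comp_op_bounded lam beta (\<lambda>z. z + b)"
  shows "Re b \<ge> 0"
proof (rule ccontr)
  assume "\<not> Re b \<ge> 0"
  obtain M where M: "\<And>f. f \<in> HE lam beta \<Longrightarrow> HE_norm lam beta (f \<circ> (\<lambda>z. z + b)) \<le> M * HE_norm lam beta f"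
    using assms unfolding comp_op_bounded_def by blast
  have "exp (- Re b * lam k) \<le> M" for k
  proof -
    define e :: "complex \<Rightarrow> complex" where "e z = 1 * exp (- of_real (lam k) * z)" for z
    have "e \<circ> (\<lambda>z. z + b) = (\<lambda>z. exp (- of_real (lam k) * b) * exp (- of_real (lam k) * z))"
      by (simp add: e_def o_def distrib_left mult_exp_exp add.commute)
    then have "HE_norm lam beta (e \<circ> (\<lambda>z. z + b)) = exp (- Re b * lam k) * beta k"
      by (simp only: HE_norm_monomial) (simp add: norm_exp_eq_Re mult.commute)
    moreover have "e \<in> HE lam beta" and "HE_norm lam beta e = beta k"
      unfolding e_def by (rule monomial_in_HE, simp only: HE_norm_monomial, simp)
    ultimately have "exp (- Re b * lam k) * beta k \<le> M * beta k"
      using M by metis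
    then show ?thesis
      using beta_pos[of k] by simp
  qed
  moreover have "filterlim (\<lambda>k. exp (- Re b * lam k)) at_top sequentially"
    using \<open>\<not> Re b \<ge> 0\<close>
    by (intro filterlim_compose[OF exp_at_top] filterlim_tendsto_pos_mult_at_top[OF tendsto_const _ lam_inf]) simp
  then have "eventually (\<lambda>k. M < exp (- Re b * lam k)) sequentially"
    by (simp add: filterlim_at_top_dense)
  then obtain k where "M < exp (- Re b * lam k)"
    by (auto simp: eventually_sequentially)
  ultimately show False
    by (meson not_le)
qed

lemma comp_op_bounded_cases:
  assumes bounded: "comp_op_bounded lam beta \<phi>" and entire: "\<phi> holomorphic_on UNIV"
  shows "(\<exists>c. \<forall>z. \<phi> z = c) \<or> (\<exists>b. Re b \<ge> 0 \<and> (\<forall>z. \<phi> z = z + b))"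
proof -
  obtain c \<gamma> where eq: "\<And>z. exp (- of_real (lam 1) * \<phi> z) = c + \<gamma> * exp (- of_real (lam 1) * z)"
    using comp_op_bounded_imp_exp_comp_affine[OF assms] by blast
  have "(\<exists>a. \<forall>z. \<phi> z = a) \<or> (\<exists>b. \<forall>z. \<phi> z = z + b)"
    using entire_exp_comp_eq_affine_exp_cases[OF entire _ eq] lam_pos[of 1] by simp
  moreover have "Re b \<ge> 0" if "\<forall>z. \<phi> z = z + b" for b
  proof -
    have "\<phi> = (\<lambda>z. z + b)"
      using that by auto
    then show ?thesis
      using bounded comp_op_bounded_translate_imp_Re_nonneg by simp
  qed
  ultimately show ?thesis
    by blast
qed

end

theorem theorem4p7:
  fixes lam beta :: "nat \<Rightarrow> real" and \<phi> :: "complex \<Rightarrow> complex"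
  assumes lam_mono: "strict_mono lam"
    and lam0: "lam 0 = 0"
    and lam_inf: "filterlim lam at_top sequentially"
    and lam_growth: "\<exists>C. eventually (\<lambda>n. ln (real (Suc n)) / lam n \<le> C) sequentially"
    and beta_pos: "\<And>n. beta n > 0"
    and condE: "filterlim (\<lambda>n. ln (beta n) / lam n) at_top sequentially"
    and entire: "\<phi> holomorphic_on UNIV"
  shows "(comp_op_bounded lam beta \<phi> \<longleftrightarrow>
           ((\<exists>c. \<forall>z. \<phi> z = c) \<or> (\<exists>b. Re b \<ge> 0 \<and> (\<forall>z. \<phi> z = z + b)))) \<and>
         ((\<exists>c. \<forall>z. \<phi> z = c) \<longrightarrow> comp_op_norm lam beta \<phi> \<ge> 1) \<and>
         ((\<exists>b. Re b \<ge> 0 \<and> (\<forall>z. \<phi> z = z + b)) \<longrightarrow> comp_op_norm lam beta \<phi> = 1)"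
proof -
  interpret dirichlet_space lam beta
    using assms by unfold_locales auto
  have const: "comp_op_bounded lam beta \<phi> \<and> comp_op_norm lam beta \<phi> \<ge> 1" if "\<forall>z. \<phi> z = c" for c
  proof -
    have "\<phi> = (\<lambda>_. c)"
      using that by auto
    then show ?thesis
      using comp_op_bounded_const comp_op_norm_ge_1 by simp
  qed
  have translate: "comp_op_bounded lam beta \<phi> \<and> comp_op_norm lam beta \<phi> = 1"
    if "Re b \<ge> 0" "\<forall>z. \<phi> z = z + b" for b
  proof -
    have "\<phi> = (\<lambda>z. z + b)"
      using that by auto
    then show ?thesis
      using comp_op_translate[OF that(1)] by simp
  qed
  show ?thesis
    using comp_op_bounded_cases[OF _ entire] const translate by blast
qed

end
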